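(* Let $\Omega_n=\dfrac{\pi^{n/2}}{\Gamma\left(\frac n2+1\right)}$ for $n\in\mathbb{N}_0$. As $n\to\infty$, the following asymptotic series holds: \[ \frac{\Omega_n^2}{\Omega_{n-1}\Omega_{n+1}}=\sum_{j=0}^\infty\frac{d_j}{n^j}, \] where $d_0=1$ and, for $j\in\mathbb{N}$, \[ d_j=\frac1j\sum_{k=1}^j(-1)^k\left[2B_{k+1}(1)-B_{k+1}\left(\tfrac12\right)-B_{k+1}\left(\tfrac32\right)\right]\frac{2^k}{k+1}d_{j-k}, \] $B_m(x)$ denoting the Bernoulli polynomials.
   Context: $\Omega_n$ is the volume of the unit ball in $\mathbb{R}^n$; $\Gamma$ is Euler's gamma function. The Bernoulli polynomials are defined by $\frac{te^{xt}}{e^t-1}=\sum_{m\ge0}B_m(x)\frac{t^m}{m!}$. The series equality is an asymptotic expansion: for every $N$, the left side minus $\sum_{j=0}^Nd_jn^{-j}$ is $O(n^{-N-1})$ as $n\to\infty$. *)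

theory Defs
  imports "HOL-Analysis.Analysis" "HOL-Computational_Algebra.Formal_Power_Series"
    "HOL-Library.Landau_Symbols"
begin

definition bernpoly :: "nat \<Rightarrow> real \<Rightarrow> real" where
  "bernpoly m x = fact m * fps_nth (fps_X * fps_exp x / (fps_exp 1 - 1)) m"

definition cB :: "nat \<Rightarrow> real" where
  "cB k = 2 * bernpoly (k + 1) 1 - bernpoly (k + 1) (1/2) - bernpoly (k + 1) (3/2)"

function dcoef :: "nat \<Rightarrow> real" where
  "dcoef 0 = 1"
| "dcoef (Suc j) = 1 / real (Suc j) *
     (\<Sum>k\<in>{1..Suc j}. (-1) ^ k * cB k * 2 ^ k / real (k + 1) * dcoef (Suc j - k))"
  by pat_completeness auto
termination by (relation "Wellfounded.measure id") auto

end

theory Submission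
  imports Defs "HOL-Computational_Algebra.Polynomial_FPS"
begin

text \<open>Write \<open>f(n)\<close> for the volume ratio. The functional equation of \<open>\<Gamma>\<close> gives
  \<open>f(n) f(n+1) = (n+2)/(n+1)\<close>, and log-convexity of \<open>\<Gamma>\<close> gives \<open>f \<ge> 1\<close>, hence \<open>f \<rightarrow> 1\<close>.
  With \<open>t = 1/n\<close> the shift \<open>n \<mapsto> n+1\<close> becomes \<open>t \<mapsto> t/(1+t)\<close>, and the recurrence for
  the \<open>d\<^sub>j\<close> says that \<open>D(t) = \<Sum> d\<^sub>j t\<^sup>j\<close> solves \<open>t D' = U D\<close>, where \<open>U\<close> is built
  from the Bernoulli polynomials. A binomial identity for the coefficients of \<open>U\<close> shows that
  \<open>D(t) D(t/(1+t)) (1+t)\<close> and \<open>1+2t\<close> solve the same Euler equation, so they coincide: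
  \<open>D\<close> is the formal solution of the functional equation. Consequently the partial sums
  \<open>D\<^sub>M(n)\<close> satisfy it up to \<open>O(n\<^sup>-\<^sup>M\<^sup>-\<^sup>1)\<close>. Then \<open>g = D\<^sub>M / f\<close> has
  \<open>g(n) g(n+1) = 1 + O(n\<^sup>-\<^sup>M\<^sup>-\<^sup>1)\<close>, so \<open>g(n) - g(n+2) = O(n\<^sup>-\<^sup>M\<^sup>-\<^sup>1)\<close>,
  and telescoping towards \<open>lim g = 1\<close> gives \<open>g(n) = 1 + O(n\<^sup>-\<^sup>M)\<close>; take \<open>M = N + 1\<close>.\<close>

section \<open>Euler equations and the substitution \<open>t \<mapsto> t/(1+t)\<close>\<close>

lemma fps_nth_compose_mult:
  fixes a b c :: "'a::comm_ring_1 fps"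
  assumes b0: "fps_nth b 0 = 0"
  shows "fps_nth ((a oo b) * c) m = (\<Sum>k\<le>m. fps_nth a k * fps_nth (b ^ k * c) m)"
proof -
  have low: "fps_nth (b ^ k) j = 0" if "j < k" for j k
    using startsby_zero_power_prefix[OF b0] that by blast
  have "fps_nth ((a oo b) * c) m
      = (\<Sum>j\<le>m. (\<Sum>k\<le>m. fps_nth a k * fps_nth (b ^ k) j) * fps_nth c (m - j))"
  proof -
    have "(\<Sum>k=0..j. fps_nth a k * fps_nth (b ^ k) j) = (\<Sum>k\<le>m. fps_nth a k * fps_nth (b ^ k) j)"
      if "j \<le> m" for j
      by (rule sum.mono_neutral_left) (use that low in auto)
    then show ?thesis
      by (simp add: fps_mult_nth fps_compose_nth atLeast0AtMost)
  qed
  also have "\<dots> = (\<Sum>k\<le>m. fps_nth a k * (\<Sum>j\<le>m. fps_nth (b ^ k) j * fps_nth c (m - j)))"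
    by (simp only: sum_distrib_right sum_distrib_left mult.assoc) (rule sum.swap)
  also have "\<dots> = (\<Sum>k\<le>m. fps_nth a k * fps_nth (b ^ k * c) m)"
    by (simp add: fps_mult_nth atLeast0AtMost)
  finally show ?thesis .
qed

lemma fps_cutoff_compose:
  fixes a b :: "'a::comm_ring_1 fps"
  shows "fps_cutoff n (fps_cutoff n a oo b) = fps_cutoff n (a oo b)"
proof (rule fps_ext)
  fix m
  have "fps_nth (fps_cutoff n a oo b) m = fps_nth (a oo b) m" if "m < n"
    using that by (auto simp: fps_compose_nth intro!: sum.cong)
  then show "fps_nth (fps_cutoff n (fps_cutoff n a oo b)) m = fps_nth (fps_cutoff n (a oo b)) m"
    by simp
qed

lemma fps_eq_of_Euler_ode:
  fixes A B V :: "'a::{idom,ring_char_0} fps"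
  assumes "fps_X * fps_deriv A = A * V" "fps_X * fps_deriv B = B * V"
    and "fps_nth V 0 = 0" "fps_nth A 0 = fps_nth B 0"
  shows "A = B"
proof -
  define C where "C = A - B"
  have ode: "fps_X * fps_deriv C = C * V"
    using assms(1,2) by (simp add: C_def algebra_simps)
  have "fps_nth C n = 0" for n
  proof (induction n rule: less_induct)
    case (less n)
    show ?case
    proof (cases n)
      case 0
      then show ?thesis using assms(4) by (simp add: C_def)
    next
      case (Suc p)
      have "of_nat n * fps_nth C n = fps_nth (C * V) n"
        by (simp flip: ode add: Suc fps_X_mult_nth)
      also have "\<dots> = 0"
        unfolding fps_mult_nth using less assms(3)
        by (intro sum.neutral) (metis atLeastAtMost_iff diff_self_eq_0 le_neq_implies_less mult_eq_0_iff)
      finally show ?thesis by (simp add: Suc del: of_nat_Suc)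
    qed
  qed
  then show ?thesis by (simp add: C_def fps_eq_iff)
qed

definition unit_shift_fps :: "'a::field fps" where
  "unit_shift_fps = fps_X * inverse (1 + fps_X)"

lemma unit_shift_fps_nth_0 [simp]: "fps_nth unit_shift_fps 0 = 0"
  by (simp add: unit_shift_fps_def)

lemma inverse_1_plus_X_mult: "inverse (1 + fps_X) * (1 + fps_X :: 'a::field fps) = 1"
  by (rule inverse_mult_eq_1) simp

lemma mult_inverse_1_plus_X: "(1 + fps_X :: 'a::field fps) * inverse (1 + fps_X) = 1"
  by (rule inverse_mult_eq_1') simp

lemma inverse_1_plus_X_power_nth:
  "fps_nth (inverse (1 + fps_X :: 'a::field fps) ^ Suc k) i = (-1) ^ i * of_nat ((k + i) choose k)"
proof (induction k arbitrary: i)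
  case 0
  then show ?case by (simp add: fps_inverse_fps_X_plus1)
next
  case (Suc k)
  have "fps_nth (inverse (1 + fps_X :: 'a fps) ^ Suc (Suc k)) i
      = fps_nth (inverse (1 + fps_X) ^ Suc k * inverse (1 + fps_X)) i"
    by (simp only: power_Suc2)
  also have "\<dots> = (\<Sum>j=0..i. (-1) ^ j * of_nat ((k + j) choose k) * (-1) ^ (i - j))"
    by (simp only: fps_mult_nth Suc.IH) (simp add: fps_inverse_fps_X_plus1)
  also have "\<dots> = (-1) ^ i * of_nat (\<Sum>j=0..i. (k + j) choose j)"
    by (auto simp: sum_distrib_left binomial_symmetric[of k] simp flip: power_add intro!: sum.cong)
  also have "(\<Sum>j=0..i. (k + j) choose j) = (Suc k + i) choose Suc k"
    by (simp add: atLeast0AtMost sum_choose_lower binomial_symmetric[of i "Suc (k + i)"])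
  finally show ?case .
qed

lemma unit_shift_fps_power_mult_nth:
  "fps_nth (unit_shift_fps ^ k * inverse (1 + fps_X) :: 'a::field fps) m
     = (if k \<le> m then (-1) ^ (m - k) * of_nat (m choose k) else 0)"
proof -
  have "unit_shift_fps ^ k * inverse (1 + fps_X)
      = fps_X ^ k * (inverse (1 + fps_X :: 'a fps) ^ k * inverse (1 + fps_X))"
    by (simp add: unit_shift_fps_def power_mult_distrib mult.assoc)
  also have "\<dots> = fps_X ^ k * inverse (1 + fps_X) ^ Suc k"
    by (simp only: power_Suc2)
  finally have eq: "unit_shift_fps ^ k * inverse (1 + fps_X :: 'a fps)
      = fps_X ^ k * inverse (1 + fps_X) ^ Suc k" .
  show ?thesis
    unfolding eq fps_X_power_mult_nth inverse_1_plus_X_power_nth by auto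
qed

lemma fps_nth_compose_unit_shift_mult:
  fixes a :: "'a::field fps"
  shows "fps_nth ((a oo unit_shift_fps) * inverse (1 + fps_X)) m
           = (\<Sum>k\<le>m. of_nat (m choose k) * (-1) ^ (m - k) * fps_nth a k)"
  by (auto simp: fps_nth_compose_mult unit_shift_fps_power_mult_nth mult_ac intro!: sum.cong)

lemma fps_deriv_unit_shift_fps:
  "fps_deriv unit_shift_fps = (inverse (1 + fps_X) :: 'a::field fps) ^ 2"
proof -
  have "fps_deriv (inverse (1 + fps_X :: 'a fps)) = - (inverse (1 + fps_X) ^ 2)"
    by (subst fps_inverse_deriv) simp_all
  then have "fps_deriv (unit_shift_fps :: 'a fps)
      = inverse (1 + fps_X) * ((1 + fps_X) * inverse (1 + fps_X)) - fps_X * inverse (1 + fps_X) ^ 2"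
    by (simp add: unit_shift_fps_def mult_inverse_1_plus_X)
  also have "\<dots> = inverse (1 + fps_X) ^ 2"
    by (simp add: algebra_simps power2_eq_square)
  finally show ?thesis .
qed

lemma Euler_operator_compose_unit_shift:
  fixes a :: "'a::field fps"
  shows "fps_X * fps_deriv (a oo unit_shift_fps) * (1 + fps_X) = (fps_X * fps_deriv a) oo unit_shift_fps"
proof -
  have "fps_X * fps_deriv (a oo unit_shift_fps) * (1 + fps_X)
      = (fps_deriv a oo unit_shift_fps) * (fps_X * inverse (1 + fps_X) * (inverse (1 + fps_X) * (1 + fps_X)))"
    by (simp add: fps_compose_deriv fps_deriv_unit_shift_fps power2_eq_square mult_ac)
  also have "\<dots> = (fps_X oo unit_shift_fps) * (fps_deriv a oo unit_shift_fps)"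
    by (simp add: inverse_1_plus_X_mult unit_shift_fps_def)
  also have "\<dots> = (fps_X * fps_deriv a) oo unit_shift_fps"
    by (simp add: fps_compose_mult_distrib)
  finally show ?thesis .
qed

definition shift_homog :: "nat \<Rightarrow> 'a::comm_ring_1 poly \<Rightarrow> 'a poly" where
  "shift_homog m p = (\<Sum>j\<le>m. smult (coeff p j) (monom 1 j * [:1, 1:] ^ (m - j)))"

lemma fps_of_poly_shift_homog:
  fixes p :: "'a::field poly"
  assumes "degree p \<le> m"
  shows "fps_of_poly (shift_homog m p) = (fps_of_poly p oo unit_shift_fps) * (1 + fps_X) ^ m"
proof -
  have shift: "fps_const (coeff p j) * (unit_shift_fps ^ j * (1 + fps_X) ^ m)
      = fps_const (coeff p j) * (fps_X ^ j * (1 + fps_X :: 'a fps) ^ (m - j))"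
    if "j \<le> m" for j
  proof -
    have "(1 + fps_X :: 'a fps) ^ m = (1 + fps_X) ^ j * (1 + fps_X) ^ (m - j)"
      using that by (simp flip: power_add)
    then have "unit_shift_fps ^ j * (1 + fps_X) ^ m
        = fps_X ^ j * (inverse (1 + fps_X) * (1 + fps_X :: 'a fps)) ^ j * (1 + fps_X) ^ (m - j)"
      by (simp add: unit_shift_fps_def power_mult_distrib mult_ac)
    then show ?thesis by (simp add: inverse_1_plus_X_mult)
  qed
  have "(fps_of_poly p oo unit_shift_fps) * (1 + fps_X) ^ m
      = (\<Sum>j\<le>m. fps_const (coeff p j) * (unit_shift_fps ^ j * (1 + fps_X) ^ m))"
    by (subst poly_as_sum_of_monoms'[OF assms, symmetric])
      (simp add: fps_of_poly_sum fps_of_poly_monom fps_compose_sum_distrib fps_compose_mult_distrib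
        fps_X_power_compose sum_distrib_right mult.assoc)
  also have "\<dots> = (\<Sum>j\<le>m. fps_const (coeff p j) * (fps_X ^ j * (1 + fps_X) ^ (m - j)))"
    by (rule sum.cong[OF refl]) (simp add: shift)
  also have "\<dots> = fps_of_poly (shift_homog m p)"
    by (simp add: shift_homog_def fps_of_poly_sum fps_of_poly_smult fps_of_poly_mult
        fps_of_poly_power fps_of_poly_monom' fps_of_poly_linear')
  finally show ?thesis ..
qed

lemma poly_shift_homog:
  fixes p :: "'a::field poly"
  assumes "degree p \<le> m" and "1 + t \<noteq> 0"
  shows "poly (shift_homog m p) t = (1 + t) ^ m * poly p (t / (1 + t))"
proof -
  have shift: "coeff p j * ((1 + t) ^ m * (t / (1 + t)) ^ j) = coeff p j * (t ^ j * (1 + t) ^ (m - j))"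
    if "j \<le> m" for j
  proof -
    have "(1 + t) ^ m = (1 + t) ^ j * (1 + t) ^ (m - j)"
      using that by (simp flip: power_add)
    then show ?thesis using assms(2) by (simp add: power_divide)
  qed
  have "(1 + t) ^ m * poly p (t / (1 + t)) = (\<Sum>j\<le>m. coeff p j * ((1 + t) ^ m * (t / (1 + t)) ^ j))"
    by (subst poly_as_sum_of_monoms'[OF assms(1), symmetric])
      (simp add: poly_sum poly_monom sum_distrib_left mult_ac)
  also have "\<dots> = (\<Sum>j\<le>m. coeff p j * (t ^ j * (1 + t) ^ (m - j)))"
    by (rule sum.cong[OF refl]) (simp add: shift)
  also have "\<dots> = poly (shift_homog m p) t"
    by (simp add: shift_homog_def poly_sum poly_monom)
  finally show ?thesis ..
qed

section \<open>The generating function of the coefficients \<open>d\<^sub>j\<close>\<close>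

definition bernoulli_fps :: "real \<Rightarrow> real fps" where
  "bernoulli_fps x = fps_X * fps_exp x / (fps_exp 1 - 1)"

lemma fps_exp_1_minus_1_nonzero: "fps_exp (1::real) - 1 \<noteq> 0"
proof
  assume "fps_exp (1::real) - 1 = 0"
  then have "fps_nth (fps_exp (1::real) - 1) 1 = 0" by simp
  then show False by simp
qed

lemma bernoulli_fps_mult: "bernoulli_fps x * (fps_exp 1 - 1) = fps_X * fps_exp x"
proof -
  have "subdegree (fps_exp (1::real) - 1) \<le> 1"
    by (rule subdegree_leI) simp
  moreover have "subdegree (fps_X * fps_exp x) = 1"
    by (rule subdegreeI) (auto simp: fps_X_mult_nth)
  ultimately show ?thesis
    using fps_times_divide_eq[OF fps_exp_1_minus_1_nonzero, of "fps_X * fps_exp x"]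
    by (simp add: bernoulli_fps_def)
qed

definition cB_fps :: "real fps" where
  "cB_fps = 2 * bernoulli_fps 1 - bernoulli_fps (1/2) - bernoulli_fps (3/2)"

lemma cB_eq_fps_nth: "cB k = fact (Suc k) * fps_nth cB_fps (Suc k)"
  by (simp add: cB_def bernpoly_def cB_fps_def bernoulli_fps_def algebra_simps)

lemma cB_fps_identity: "cB_fps * (1 + fps_exp (1/2)) = fps_X * (fps_exp (1/2) - fps_exp 1)"
proof -
  define e :: "real fps" where "e = fps_exp (1/2)"
  have e1: "fps_exp 1 = e * e" and e3: "fps_exp (3/2) = e * e * e"
    by (simp_all add: e_def flip: fps_exp_add_mult)
  have "cB_fps * (fps_exp 1 - 1)
      = 2 * (bernoulli_fps 1 * (fps_exp 1 - 1)) - bernoulli_fps (1/2) * (fps_exp 1 - 1)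
        - bernoulli_fps (3/2) * (fps_exp 1 - 1)"
    by (simp add: cB_fps_def algebra_simps)
  also have "\<dots> = fps_X * (2 * (e * e) - e - e * e * e)"
    by (simp only: bernoulli_fps_mult) (simp add: e1 e3 e_def algebra_simps)
  finally have "cB_fps * (e * e - 1) = fps_X * (2 * (e * e) - e - e * e * e)"
    unfolding e1 .
  then have "(cB_fps * (1 + e)) * (fps_exp 1 - 1) = (fps_X * (e - e * e)) * (fps_exp 1 - 1)"
    unfolding e1 by algebra
  then show ?thesis
    using fps_exp_1_minus_1_nonzero by (simp add: e_def e1)
qed

lemma cB_fps_nth_0: "fps_nth cB_fps 0 = 0"
  using arg_cong[OF cB_fps_identity, of "\<lambda>f. fps_nth f 0"] by (simp add: fps_mult_nth)

lemma cB_fps_recurrence: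
  "fps_nth cB_fps (Suc m) + (\<Sum>k\<le>m. fps_nth cB_fps (Suc k) * (1/2) ^ (m - k) / fact (m - k))
     = ((1/2) ^ m - 1) / fact m"
proof -
  have "fps_nth (cB_fps * (1 + fps_exp (1/2))) (Suc m)
      = fps_nth cB_fps (Suc m) + (\<Sum>i=0..Suc m. fps_nth cB_fps i * (1/2) ^ (Suc m - i) / fact (Suc m - i))"
    by (simp add: algebra_simps fps_mult_nth fps_exp_def)
  also have "\<dots> = fps_nth cB_fps (Suc m) + (\<Sum>k\<le>m. fps_nth cB_fps (Suc k) * (1/2) ^ (m - k) / fact (m - k))"
    unfolding sum.atLeast0_atMost_Suc_shift by (simp add: cB_fps_nth_0 atMost_atLeast0)
  finally show ?thesis
    by (simp add: cB_fps_identity fps_X_mult_nth diff_divide_distrib)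
qed

definition ucoef :: "nat \<Rightarrow> real" where
  "ucoef k = (-1) ^ k * cB k * 2 ^ k / real (k + 1)"

lemma minus_2_power: "(-2::real) ^ k = (-1) ^ k * 2 ^ k"
  by (simp flip: power_mult_distrib)

lemma ucoef_eq_fps_nth: "ucoef k = (-2) ^ k * fact k * fps_nth cB_fps (Suc k)"
  by (simp add: ucoef_def cB_eq_fps_nth minus_2_power field_simps del: of_nat_Suc)

lemma ucoef_binomial_identity:
  "ucoef m + (\<Sum>k\<le>m. of_nat (m choose k) * (-1) ^ (m - k) * ucoef k) = (-1) ^ m - (-2) ^ m"
proof -
  have summand: "of_nat (m choose k) * (-1) ^ (m - k) * ucoef k
      = (-2) ^ m * fact m * (fps_nth cB_fps (Suc k) * (1/2) ^ (m - k) / fact (m - k))"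
    if "k \<le> m" for k
  proof -
    obtain j where m: "m = k + j" using \<open>k \<le> m\<close> le_Suc_ex by blast
    have "(-2::real) ^ m * (1/2) ^ (m - k) = (-2) ^ k * (-1) ^ j"
      by (simp add: m power_add minus_2_power power_one_over)
    moreover have "fact m / fact (m - k) = fact k * (of_nat (m choose k) :: real)"
      using fact_binomial[OF that, where 'a = real] by simp
    ultimately show ?thesis
      by (simp add: ucoef_eq_fps_nth m field_simps)
  qed
  have "ucoef m + (\<Sum>k\<le>m. of_nat (m choose k) * (-1) ^ (m - k) * ucoef k)
      = (-2) ^ m * fact m * fps_nth cB_fps (Suc m)
        + (\<Sum>k\<le>m. (-2) ^ m * fact m * (fps_nth cB_fps (Suc k) * (1/2) ^ (m - k) / fact (m - k)))"
    by (intro arg_cong2[where f = "(+)"] sum.cong refl)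
      (simp_all only: ucoef_eq_fps_nth[of m] summand atMost_iff)
  also have "\<dots> = (-2) ^ m * fact m * (fps_nth cB_fps (Suc m)
          + (\<Sum>k\<le>m. fps_nth cB_fps (Suc k) * (1/2) ^ (m - k) / fact (m - k)))"
    by (simp only: distrib_left sum_distrib_left)
  also have "\<dots> = (-2) ^ m * ((1/2) ^ m - 1)"
    by (simp add: cB_fps_recurrence)
  also have "\<dots> = (-1) ^ m - (-2) ^ m"
    by (simp add: right_diff_distrib power_one_over minus_2_power)
  finally show ?thesis .
qed

lemma ucoef_0: "ucoef 0 = 0"
  using ucoef_binomial_identity[of 0] by simp

definition dfps :: "real fps" where "dfps = Abs_fps dcoef"
definition ufps :: "real fps" where "ufps = Abs_fps ucoef"

lemma dfps_Euler_ode: "fps_X * fps_deriv dfps = ufps * dfps"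
proof (rule fps_ext)
  fix n
  show "fps_nth (fps_X * fps_deriv dfps) n = fps_nth (ufps * dfps) n"
  proof (cases n)
    case 0
    then show ?thesis by (simp add: ufps_def fps_X_mult_nth fps_mult_nth ucoef_0)
  next
    case (Suc j)
    have "fps_nth (ufps * dfps) n = (\<Sum>k\<in>{1..Suc j}. ucoef k * dcoef (Suc j - k))"
      by (simp add: Suc ufps_def dfps_def fps_mult_nth sum.atLeast_Suc_atMost ucoef_0)
    also have "\<dots> = real (Suc j) * dcoef (Suc j)"
      by (simp add: ucoef_def)
    finally show ?thesis by (simp add: Suc fps_X_mult_nth dfps_def)
  qed
qed

text \<open>Both sides solve \<open>t y' = y V\<close> with \<open>V = 2t/(1+2t)\<close>; for the left-hand side this is
  the binomial identity for the \<open>u\<^sub>k\<close>.\<close>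
lemma dfps_functional_identity:
  "dfps * (dfps oo unit_shift_fps) * (1 + fps_X) = 1 + 2 * fps_X"
proof -
  define V where "V = ufps + (ufps oo unit_shift_fps) * inverse (1 + fps_X) + fps_X * inverse (1 + fps_X)"
  have V_nth: "fps_nth V m = (if m = 0 then 0 else - ((-2) ^ m))" for m
  proof -
    have "fps_nth V m = ucoef m + (\<Sum>k\<le>m. of_nat (m choose k) * (-1) ^ (m - k) * ucoef k)
        + fps_nth (fps_X * inverse (1 + fps_X)) m"
      by (simp only: V_def fps_add_nth fps_nth_compose_unit_shift_mult ufps_def fps_nth_Abs_fps)
    then show ?thesis
      unfolding ucoef_binomial_identity
      by (cases m) (simp_all add: ucoef_0 fps_inverse_fps_X_plus1 fps_X_mult_nth)
  qed
  have V_mult: "(1 + fps_X) * V = (1 + fps_X) * ufps + (ufps oo unit_shift_fps) + fps_X"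
  proof -
    have "(1 + fps_X) * V = (1 + fps_X) * ufps + (ufps oo unit_shift_fps) * ((1 + fps_X) * inverse (1 + fps_X))
        + fps_X * ((1 + fps_X) * inverse (1 + fps_X))"
      by (simp add: V_def algebra_simps)
    then show ?thesis by (simp only: mult_inverse_1_plus_X mult_1_right)
  qed
  have "fps_X * fps_deriv (dfps * (dfps oo unit_shift_fps) * (1 + fps_X))
      = (fps_X * fps_deriv dfps) * (dfps oo unit_shift_fps) * (1 + fps_X)
        + dfps * (fps_X * fps_deriv (dfps oo unit_shift_fps) * (1 + fps_X))
        + fps_X * dfps * (dfps oo unit_shift_fps)"
    by (simp add: algebra_simps)
  also have "\<dots> = dfps * (dfps oo unit_shift_fps) * ((1 + fps_X) * V)"
    unfolding Euler_operator_compose_unit_shift dfps_Euler_ode V_mult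
      fps_compose_mult_distrib[OF unit_shift_fps_nth_0]
    by (simp add: algebra_simps)
  finally have lhs: "fps_X * fps_deriv (dfps * (dfps oo unit_shift_fps) * (1 + fps_X))
      = dfps * (dfps oo unit_shift_fps) * (1 + fps_X) * V"
    by (simp add: mult_ac)
  have rhs: "fps_X * fps_deriv (1 + 2 * fps_X) = (1 + 2 * fps_X :: real fps) * V"
  proof (rule fps_ext)
    fix m
    have "fps_nth ((1 + 2 * fps_X) * V) m = fps_nth V m + 2 * fps_nth (fps_X * V) m"
      by (simp add: distrib_right numeral_fps_const mult.assoc)
    also have "\<dots> = fps_nth (fps_X * fps_deriv (1 + 2 * fps_X)) m"
      by (cases m; cases "m - 1") (simp_all add: V_nth fps_X_mult_nth numeral_fps_const)
    finally show "fps_nth (fps_X * fps_deriv (1 + 2 * fps_X)) m = fps_nth ((1 + 2 * fps_X) * V) m" ..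
  qed
  show ?thesis
    by (rule fps_eq_of_Euler_ode[OF lhs rhs]) (simp_all add: V_nth dfps_def)
qed

section \<open>Truncation error of the partial sums\<close>

definition dpoly :: "nat \<Rightarrow> real poly" where "dpoly M = truncate_fps (Suc M) dfps"

lemma degree_dpoly: "degree (dpoly M) \<le> M"
  using degree_truncate_fps[of "Suc M" dfps] by (simp add: dpoly_def)

definition remainder_poly :: "nat \<Rightarrow> real poly" where
  "remainder_poly M = [:1, 2:] * [:1, 1:] ^ M - dpoly M * shift_homog (Suc M) (dpoly M)"

lemma coeff_remainder_poly:
  assumes "i \<le> M"
  shows "coeff (remainder_poly M) i = 0"
proof -
  let ?D = "dfps" and ?W = "unit_shift_fps :: real fps"
  have fps: "fps_of_poly (remainder_poly M) = (1 + 2 * fps_X) * (1 + fps_X) ^ M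
      - fps_cutoff (Suc M) ?D * ((fps_cutoff (Suc M) ?D oo ?W) * (1 + fps_X) ^ Suc M)"
    unfolding remainder_poly_def fps_of_poly_diff fps_of_poly_mult fps_of_poly_power
      fps_of_poly_shift_homog[OF le_SucI[OF degree_dpoly]]
    by (simp add: dpoly_def fps_of_poly_linear' numeral_fps_const)
  have "fps_nth (fps_cutoff (Suc M) ?D * ((fps_cutoff (Suc M) ?D oo ?W) * (1 + fps_X) ^ Suc M)) i
      = fps_nth (?D * ((fps_cutoff (Suc M) ?D oo ?W) * (1 + fps_X) ^ Suc M)) i"
    using assms by (simp only: fps_cutoff_left_mult_nth le_imp_less_Suc)
  also have "\<dots> = fps_nth ((?D * (1 + fps_X) ^ Suc M) * (fps_cutoff (Suc M) ?D oo ?W)) i"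
    by (simp only: mult_ac)
  also have "\<dots> = fps_nth ((?D * (1 + fps_X) ^ Suc M) * fps_cutoff (Suc M) (fps_cutoff (Suc M) ?D oo ?W)) i"
    using assms by (simp only: fps_cutoff_right_mult_nth le_imp_less_Suc)
  also have "\<dots> = fps_nth ((?D * (1 + fps_X) ^ Suc M) * (?D oo ?W)) i"
    using assms by (simp add: fps_cutoff_compose fps_cutoff_right_mult_nth)
  also have "\<dots> = fps_nth ((?D * (?D oo ?W) * (1 + fps_X)) * (1 + fps_X) ^ M) i"
    by (simp add: mult_ac)
  finally show ?thesis
    by (simp add: fps dfps_functional_identity flip: fps_of_poly_nth)
qed

definition dsum :: "nat \<Rightarrow> real \<Rightarrow> real" where
  "dsum M x = (\<Sum>j\<le>M. dcoef j / x ^ j)"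

lemma dsum_eq_poly_dpoly: "dsum M x = poly (dpoly M) (1 / x)"
proof -
  have "poly (dpoly M) (1 / x) = (\<Sum>j\<le>M. coeff (dpoly M) j * (1 / x) ^ j)"
    by (subst poly_as_sum_of_monoms'[OF degree_dpoly, symmetric]) (simp add: poly_sum poly_monom)
  then show ?thesis
    by (simp add: dsum_def dpoly_def coeff_truncate_fps dfps_def power_one_over)
qed

lemma dsum_product_remainder:
  assumes "x > 0"
  shows "(x + 2) / (x + 1) - dsum M x * dsum M (x + 1)
           = poly (remainder_poly M) (1 / x) / (1 + 1 / x) ^ Suc M"
proof -
  define t where "t = 1 / x"
  have t: "t > 0" using assms by (simp add: t_def)
  have "dsum M (x + 1) = poly (dpoly M) (t / (1 + t))"
    using assms by (simp add: dsum_eq_poly_dpoly t_def field_simps)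
  also have "\<dots> = poly (shift_homog (Suc M) (dpoly M)) t / (1 + t) ^ Suc M"
    using t le_SucI[OF degree_dpoly] by (simp add: poly_shift_homog)
  finally have shifted: "dsum M (x + 1) = poly (shift_homog (Suc M) (dpoly M)) t / (1 + t) ^ Suc M" .
  have "(1 + 2 * t) * (1 + t) ^ M / (1 + t) ^ Suc M = (1 + 2 * t) / (1 + t)"
    using t by simp
  also have "\<dots> = ((x + 2) / x) / ((x + 1) / x)"
    using assms by (simp add: t_def add_divide_distrib)
  also have "\<dots> = (x + 2) / (x + 1)"
    using assms by simp
  finally have ratio: "(x + 2) / (x + 1) = (1 + 2 * t) * (1 + t) ^ M / (1 + t) ^ Suc M" ..
  have rem: "poly (remainder_poly M) t
      = (1 + 2 * t) * (1 + t) ^ M - poly (dpoly M) t * poly (shift_homog (Suc M) (dpoly M)) t"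
    by (simp add: remainder_poly_def algebra_simps)
  have "dsum M x = poly (dpoly M) t"
    by (simp add: dsum_eq_poly_dpoly t_def)
  then show ?thesis
    unfolding t_def[symmetric] rem ratio shifted by (simp add: diff_divide_distrib)
qed

lemma abs_poly_le_if_low_coeffs_zero:
  fixes p :: "real poly"
  assumes "\<And>i. i \<le> M \<Longrightarrow> coeff p i = 0" and "0 \<le> t" "t \<le> 1"
  shows "\<bar>poly p t\<bar> \<le> (\<Sum>i\<le>degree p. \<bar>coeff p i\<bar>) * t ^ Suc M"
proof -
  have "\<bar>coeff p i * t ^ i\<bar> \<le> \<bar>coeff p i\<bar> * t ^ Suc M" for i
  proof (cases "i \<le> M")
    case False
    then have "t ^ i \<le> t ^ Suc M" using assms(2,3) by (intro power_decreasing) auto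
    then show ?thesis using assms(2) by (simp add: abs_mult mult_left_mono)
  qed (simp add: assms(1))
  then have "\<bar>poly p t\<bar> \<le> (\<Sum>i\<le>degree p. \<bar>coeff p i\<bar> * t ^ Suc M)"
    unfolding poly_altdef by (intro order.trans[OF sum_abs] sum_mono)
  then show ?thesis by (simp add: sum_distrib_right)
qed

lemma dsum_product_remainder_bigo:
  "(\<lambda>n. (real n + 2) / (real n + 1) - dsum M (real n) * dsum M (real n + 1))
     \<in> O(\<lambda>n. 1 / real n ^ Suc M)"
proof (rule bigoI)
  let ?c = "\<Sum>i\<le>degree (remainder_poly M). \<bar>coeff (remainder_poly M) i\<bar>"
  show "\<forall>\<^sub>F n in sequentially. norm ((real n + 2) / (real n + 1) - dsum M (real n) * dsum M (real n + 1))
          \<le> ?c * norm (1 / real n ^ Suc M)"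
    unfolding eventually_sequentially
  proof (intro exI allI impI)
    fix n :: nat
    assume "n \<ge> 1"
    then have x: "real n \<ge> 1" by simp
    have "\<bar>poly (remainder_poly M) (1 / real n)\<bar> / (1 + 1 / real n) ^ Suc M
        \<le> \<bar>poly (remainder_poly M) (1 / real n)\<bar> / 1"
      using x by (intro divide_left_mono one_le_power zero_less_power mult_pos_pos)
        (auto simp: add_pos_nonneg simp del: power_Suc)
    also have "\<dots> \<le> ?c * (1 / real n) ^ Suc M"
      using x by (simp only: div_by_1, intro abs_poly_le_if_low_coeffs_zero coeff_remainder_poly) auto
    finally show "norm ((real n + 2) / (real n + 1) - dsum M (real n) * dsum M (real n + 1))
        \<le> ?c * norm (1 / real n ^ Suc M)"
      using x by (simp add: dsum_product_remainder abs_divide power_one_over)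
  qed
qed

lemma dsum_tendsto: "(\<lambda>n. dsum M (real n)) \<longlonglongrightarrow> 1"
proof -
  have "(\<lambda>n. \<Sum>j\<le>M. dcoef j * inverse (real n) ^ j) \<longlonglongrightarrow> (\<Sum>j\<le>M. dcoef j * 0 ^ j)"
    by (intro tendsto_sum tendsto_mult tendsto_const tendsto_power lim_inverse_n)
  moreover have "(\<Sum>j\<le>M. dcoef j * 0 ^ j) = 1"
    by (simp add: power_0_left sum.atMost_shift)
  ultimately show ?thesis
    by (simp add: dsum_def divide_inverse power_inverse)
qed

section \<open>Sequences with nearly equal consecutive products\<close>

lemma sum_inverse_square_step2_le:
  fixes x :: real
  assumes "x \<ge> 2"
  shows "(\<Sum>i<k. 1 / (x + 2 * real i) ^ 2) \<le> 1 / x - 1 / (x + 2 * real k)"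
proof (induction k)
  case (Suc k)
  define y where "y = x + 2 * real k"
  have y: "y \<ge> 2" using assms by (simp add: y_def)
  then have "y * (y + 2) \<le> y * (2 * y)"
    by (intro mult_left_mono) auto
  then have "2 / (2 * y ^ 2) \<le> 2 / (y * (y + 2))"
    using y by (intro divide_left_mono) (auto simp: power2_eq_square)
  also have "\<dots> = 1 / y - 1 / (y + 2)"
    using y by (simp add: field_simps)
  finally have "1 / y ^ 2 \<le> 1 / y - 1 / (y + 2)"
    by simp
  with Suc show ?case
    by (simp add: y_def algebra_simps)
qed simp

lemma sum_inverse_power_step2_le:
  fixes x :: real
  assumes "x \<ge> 2" and "M \<ge> 1"
  shows "(\<Sum>i<k. 1 / (x + 2 * real i) ^ Suc M) \<le> 1 / x ^ M"
proof -
  have "1 / (x + 2 * real i) ^ Suc M \<le> 1 / x ^ (M - 1) * (1 / (x + 2 * real i) ^ 2)" for i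
  proof -
    have "x ^ (M - 1) * (x + 2 * real i) ^ 2 \<le> (x + 2 * real i) ^ (M - 1) * (x + 2 * real i) ^ 2"
      using assms by (intro mult_right_mono power_mono) auto
    also have "\<dots> = (x + 2 * real i) ^ Suc M"
      using assms by (simp flip: power_add)
    finally show ?thesis
      using assms by (simp add: frac_le)
  qed
  then have "(\<Sum>i<k. 1 / (x + 2 * real i) ^ Suc M)
      \<le> 1 / x ^ (M - 1) * (\<Sum>i<k. 1 / (x + 2 * real i) ^ 2)"
    by (simp add: sum_distrib_left sum_mono)
  also have "\<dots> \<le> 1 / x ^ (M - 1) * (1 / x)"
  proof (rule mult_left_mono)
    have "0 \<le> 1 / (x + 2 * real k)" using assms by simp
    then show "(\<Sum>i<k. 1 / (x + 2 * real i) ^ 2) \<le> 1 / x"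
      using sum_inverse_square_step2_le[OF assms(1), of k] by linarith
  qed (use assms in simp)
  also have "\<dots> = 1 / x ^ M"
    using assms by (cases M) auto
  finally show ?thesis .
qed

lemma dist_limit_le_of_step2_bound:
  fixes g :: "nat \<Rightarrow> real"
  assumes lim: "g \<longlonglongrightarrow> L" and n: "n \<ge> 2" and M: "M \<ge> 1"
    and step: "\<And>m. n \<le> m \<Longrightarrow> \<bar>g m - g (m + 2)\<bar> \<le> C / real m ^ Suc M"
  shows "\<bar>g n - L\<bar> \<le> C / real n ^ M"
proof -
  have "0 \<le> C / real n ^ Suc M"
    using step[of n] abs_ge_zero order_trans by blast
  moreover have "real n ^ Suc M > 0"
    using n by simp
  ultimately have "C \<ge> 0"
    by (simp add: zero_le_divide_iff del: power_Suc)
  have telescope: "\<bar>g n - g (n + 2 * k)\<bar> \<le> C * (\<Sum>i<k. 1 / (real n + 2 * real i) ^ Suc M)" for k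
  proof (induction k)
    case (Suc k)
    have "\<bar>g n - g (n + 2 * Suc k)\<bar> \<le> \<bar>g n - g (n + 2 * k)\<bar> + \<bar>g (n + 2 * k) - g (n + 2 * k + 2)\<bar>"
      by (simp add: abs_triangle_ineq4[THEN order_trans] abs_diff_triangle_ineq)
    also have "\<dots> \<le> C * (\<Sum>i<k. 1 / (real n + 2 * real i) ^ Suc M) + C / (real n + 2 * real k) ^ Suc M"
      using Suc step[of "n + 2 * k"] by (intro add_mono) simp_all
    also have "\<dots> = C * (\<Sum>i<Suc k. 1 / (real n + 2 * real i) ^ Suc M)"
      by (simp add: distrib_left)
    finally show ?case .
  qed simp
  have "(\<lambda>k. \<bar>g n - g (n + 2 * k)\<bar>) \<longlonglongrightarrow> \<bar>g n - L\<bar>"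
  proof -
    have "strict_mono (\<lambda>k. n + 2 * k)"
      by (rule strict_monoI) simp
    from LIMSEQ_subseq_LIMSEQ[OF lim this] show ?thesis
      by (auto intro!: tendsto_intros simp: comp_def)
  qed
  moreover have "\<bar>g n - g (n + 2 * k)\<bar> \<le> C / real n ^ M" for k
  proof -
    have "C * (\<Sum>i<k. 1 / (real n + 2 * real i) ^ Suc M) \<le> C * (1 / real n ^ M)"
      using n M \<open>C \<ge> 0\<close> by (intro mult_left_mono sum_inverse_power_step2_le) auto
    then show ?thesis using telescope[of k] by simp
  qed
  ultimately show ?thesis
    by (intro LIMSEQ_le_const2) auto
qed

lemma dist_one_le_of_consecutive_products:
  fixes g :: "nat \<Rightarrow> real"
  assumes lim: "g \<longlonglongrightarrow> 1" and M: "M \<ge> 1" and n: "n \<ge> max N 2"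
    and bound: "\<And>m. \<bar>g m\<bar> \<le> A"
    and product: "\<And>m. m \<ge> N \<Longrightarrow> \<bar>g m * g (Suc m) - 1\<bar> \<le> c / real m ^ Suc M"
  shows "\<bar>g n - 1\<bar> \<le> 2 * A * c / real n ^ M"
proof (rule dist_limit_le_of_step2_bound[OF lim _ M])
  fix m
  assume m: "n \<le> m"
  then have m_pos: "real m > 0" using n by simp
  have "0 \<le> c / real m ^ Suc M"
    using product[of m] m n abs_ge_zero order_trans by fastforce
  moreover have "real m ^ Suc M > 0"
    using m_pos by (rule zero_less_power)
  ultimately have "c \<ge> 0"
    by (simp add: zero_le_divide_iff del: power_Suc)
  then have "c / real (Suc m) ^ Suc M \<le> c / real m ^ Suc M"
    using m_pos by (intro divide_left_mono power_mono mult_pos_pos zero_less_power) auto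
  then have next_product: "\<bar>g (Suc m) * g (m + 2) - 1\<bar> \<le> c / real m ^ Suc M"
    using product[of "Suc m"] m n by simp
  \<comment> \<open>Compare \<open>g m g(m+1) g(m+2)\<close> bracketed both ways.\<close>
  have "g m - g (m + 2) = g (m + 2) * (g m * g (Suc m) - 1) - g m * (g (Suc m) * g (m + 2) - 1)"
    by (simp add: algebra_simps)
  then have "\<bar>g m - g (m + 2)\<bar> \<le> \<bar>g (m + 2)\<bar> * \<bar>g m * g (Suc m) - 1\<bar> + \<bar>g m\<bar> * \<bar>g (Suc m) * g (m + 2) - 1\<bar>"
    by (simp add: abs_mult[symmetric] abs_triangle_ineq4)
  also have "\<dots> \<le> A * (c / real m ^ Suc M) + A * (c / real m ^ Suc M)"
    using product[of m] next_product m n bound order_trans[OF abs_ge_zero bound]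
    by (intro add_mono mult_mono) auto
  finally show "\<bar>g m - g (m + 2)\<bar> \<le> 2 * A * c / real m ^ Suc M"
    by simp
qed (use n in simp)

lemma bigo_diff_of_consecutive_products:
  fixes f h :: "nat \<Rightarrow> real"
  assumes M: "M \<ge> 1" and f_ge_1: "\<And>n. 1 \<le> f n"
    and f_lim: "f \<longlonglongrightarrow> 1" and h_lim: "h \<longlonglongrightarrow> 1"
    and products: "(\<lambda>n. f n * f (Suc n) - h n * h (Suc n)) \<in> O(\<lambda>n. 1 / real n ^ Suc M)"
  shows "(\<lambda>n. f n - h n) \<in> O(\<lambda>n. 1 / real n ^ M)"
proof -
  obtain c where "\<forall>\<^sub>F n in sequentially. \<bar>f n * f (Suc n) - h n * h (Suc n)\<bar> \<le> c * \<bar>1 / real n ^ Suc M\<bar>"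
    using products by (auto elim!: landau_o.bigE)
  then obtain N where c: "\<And>n. n \<ge> N \<Longrightarrow> \<bar>f n * f (Suc n) - h n * h (Suc n)\<bar> \<le> c / real n ^ Suc M"
    by (auto simp: eventually_sequentially)
  obtain A where A: "\<And>n. \<bar>h n\<bar> \<le> A"
    using convergent_imp_Bseq[OF convergentI[OF h_lim]] by (metis BseqE real_norm_def)
  define g where "g n = h n / f n" for n
  have f_pos: "f n > 0" for n using f_ge_1[of n] by simp
  have "\<bar>g n\<bar> \<le> A" for n
  proof -
    have "\<bar>g n\<bar> \<le> \<bar>h n\<bar> / 1"
      unfolding g_def abs_divide using f_ge_1[of n] by (intro divide_left_mono) auto
    then show ?thesis using A[of n] by simp
  qed
  moreover have "\<bar>g n * g (Suc n) - 1\<bar> \<le> c / real n ^ Suc M" if "n \<ge> N" for n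
  proof -
    have ge_1: "1 \<le> f n * f (Suc n)"
      using f_ge_1[of n] f_ge_1[of "Suc n"] by (metis mult_mono mult_1_left zero_le_one order_trans)
    have "g n * g (Suc n) - 1 = - (f n * f (Suc n) - h n * h (Suc n)) / (f n * f (Suc n))"
      using f_pos[of n] f_pos[of "Suc n"] by (simp add: g_def field_simps)
    then have "\<bar>g n * g (Suc n) - 1\<bar> = \<bar>f n * f (Suc n) - h n * h (Suc n)\<bar> / (f n * f (Suc n))"
      using ge_1 by (simp add: abs_divide abs_minus_commute)
    also have "\<dots> \<le> \<bar>f n * f (Suc n) - h n * h (Suc n)\<bar> / 1"
      using ge_1 by (intro divide_left_mono) auto
    finally show ?thesis using c[OF that] by simp
  qed
  moreover have "g \<longlonglongrightarrow> 1"
    using tendsto_divide[OF h_lim f_lim] by (simp add: g_def[abs_def])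
  ultimately have g_near_1: "\<bar>g n - 1\<bar> \<le> 2 * A * c / real n ^ M" if "n \<ge> max N 2" for n
    using dist_one_le_of_consecutive_products M that by blast
  have "\<forall>\<^sub>F n in sequentially. f n < 2"
    using f_lim by (rule order_tendstoD) simp
  then have "\<forall>\<^sub>F n in sequentially. \<bar>f n - h n\<bar> \<le> 2 * (2 * A * c) * \<bar>1 / real n ^ M\<bar>"
    using eventually_ge_at_top[of "max N 2"]
  proof eventually_elim
    case (elim n)
    have "\<bar>f n - h n\<bar> = f n * \<bar>g n - 1\<bar>"
      using f_pos[of n] by (simp add: g_def field_simps abs_mult abs_minus_commute)
    also have "\<dots> \<le> 2 * (2 * A * c / real n ^ M)"
      using elim f_pos[of n] g_near_1[of n] by (intro mult_mono) auto
    finally show ?case by simp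
  qed
  then show ?thesis
    by (intro bigoI) simp
qed

section \<open>The volume ratio\<close>

definition gamma_ratio :: "real \<Rightarrow> real" where
  "gamma_ratio a = Gamma a * Gamma (a + 1) / Gamma (a + 1/2) ^ 2"

lemma gamma_ratio_mult_half_shift:
  assumes "a > 0"
  shows "gamma_ratio a * gamma_ratio (a + 1/2) = (a + 1/2) / a"
proof -
  have rec: "Gamma (z + 1) = z * Gamma z" if "z > 0" for z :: real
    using that by (intro Gamma_plus1) (auto elim!: nonpos_Ints_cases)
  have g1: "Gamma (a + 1) = a * Gamma a"
    by (rule rec) (use assms in simp)
  have g2: "Gamma ((a + 1/2) + 1) = (a + 1/2) * Gamma (a + 1/2)"
    by (rule rec) (use assms in simp)
  have "a + 1/2 + 1/2 = a + 1" by simp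
  then have "gamma_ratio a * gamma_ratio (a + 1/2)
      = (Gamma a * (a * Gamma a) / Gamma (a + 1/2) ^ 2)
        * (Gamma (a + 1/2) * ((a + 1/2) * Gamma (a + 1/2)) / (a * Gamma a) ^ 2)"
    unfolding gamma_ratio_def g2 by (simp only: g1)
  also have "\<dots> = (a + 1/2) / a"
  proof -
    have cancel: "(A * (c * A) / B ^ 2) * (B * (b * B) / (c * A) ^ 2) = b / c"
      if "A \<noteq> 0" "B \<noteq> 0" for A B b c :: real
      using that by (simp add: field_simps power2_eq_square)
    have "Gamma a > 0" "Gamma (a + 1/2) > 0"
      using assms by simp_all
    then show ?thesis
      by (intro cancel) linarith+
  qed
  finally show ?thesis .
qed

lemma gamma_ratio_ge_1:
  assumes "a > 0"
  shows "1 \<le> gamma_ratio a"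
proof -
  have pos: "Gamma a > 0" "Gamma (a + 1) > 0" "Gamma (a + 1/2) > 0"
    using assms by (simp_all add: Gamma_real_pos)
  have mid: "(1 - 1/2) *\<^sub>R a + (1/2) *\<^sub>R (a + 1) = a + 1/2"
    by (simp add: field_simps)
  have "(ln \<circ> Gamma) ((1 - 1/2) *\<^sub>R a + (1/2) *\<^sub>R (a + 1))
      \<le> (1 - 1/2) * (ln \<circ> Gamma) a + (1/2) * (ln \<circ> Gamma) (a + 1)"
    by (rule convex_onD[OF log_convex_Gamma_real]) (use assms in auto)
  then have "ln (Gamma (a + 1/2)) \<le> (1 - 1/2) * ln (Gamma a) + (1/2) * ln (Gamma (a + 1))"
    unfolding mid by simp
  then have "ln (Gamma (a + 1/2) ^ 2) \<le> ln (Gamma a * Gamma (a + 1))"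
    using pos by (simp add: ln_mult ln_realpow)
  then show ?thesis
    using pos by (simp add: gamma_ratio_def)
qed

lemma unit_ball_vol_ratio_eq_gamma_ratio:
  assumes "y > -1"
  shows "unit_ball_vol y ^ 2 / (unit_ball_vol (y - 1) * unit_ball_vol (y + 1))
           = gamma_ratio ((y + 1) / 2)"
proof -
  define a where "a = (y + 1) / 2"
  have a: "a > 0" using assms by (simp add: a_def)
  have "(y - 1) / 2 + (y + 1) / 2 = y / 2 + y / 2"
    by (simp add: field_simps)
  then have "(pi powr (y / 2)) ^ 2 = pi powr ((y - 1) / 2) * pi powr ((y + 1) / 2)"
    by (simp only: power2_eq_square flip: powr_add)
  moreover have "(y - 1) / 2 + 1 = a" "(y + 1) / 2 + 1 = a + 1" "y / 2 + 1 = a + 1/2"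
    by (simp_all add: a_def field_simps)
  moreover have "Gamma a > 0" "Gamma (a + 1) > 0" "Gamma (a + 1/2) > 0"
    using a by (simp_all add: Gamma_real_pos)
  ultimately show ?thesis
    by (simp add: unit_ball_vol_def gamma_ratio_def power_divide power2_eq_square flip: a_def)
qed

definition vol_ratio :: "nat \<Rightarrow> real" where
  "vol_ratio n = unit_ball_vol (real n) ^ 2 / (unit_ball_vol (real n - 1) * unit_ball_vol (real n + 1))"

lemma vol_ratio_eq_gamma_ratio: "vol_ratio n = gamma_ratio ((real n + 1) / 2)"
  unfolding vol_ratio_def by (rule unit_ball_vol_ratio_eq_gamma_ratio) simp

lemma vol_ratio_ge_1: "1 \<le> vol_ratio n"
  unfolding vol_ratio_eq_gamma_ratio by (rule gamma_ratio_ge_1) simp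

lemma vol_ratio_mult_Suc: "vol_ratio n * vol_ratio (Suc n) = (real n + 2) / (real n + 1)"
proof -
  have shift: "(real (Suc n) + 1) / 2 = (real n + 1) / 2 + 1/2"
    by (simp add: field_simps)
  have "vol_ratio n * vol_ratio (Suc n) = ((real n + 1) / 2 + 1/2) / ((real n + 1) / 2)"
    unfolding vol_ratio_eq_gamma_ratio shift by (rule gamma_ratio_mult_half_shift) simp
  then show ?thesis
    by (simp add: field_simps)
qed

lemma vol_ratio_tendsto: "vol_ratio \<longlonglongrightarrow> 1"
proof (rule tendsto_sandwich[of "\<lambda>_. 1" _ _ "\<lambda>n. 1 + inverse (real (Suc n))"])
  have "vol_ratio n * 1 \<le> vol_ratio n * vol_ratio (Suc n)" for n
    using vol_ratio_ge_1[of n] vol_ratio_ge_1[of "Suc n"] by (intro mult_left_mono) auto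
  then have "vol_ratio n \<le> (real n + 2) / (real n + 1)" for n
    by (simp add: vol_ratio_mult_Suc)
  moreover have "(real n + 2) / (real n + 1) = 1 + inverse (real (Suc n))" for n
    by (simp add: field_simps)
  ultimately show "\<forall>\<^sub>F n in sequentially. vol_ratio n \<le> 1 + inverse (real (Suc n))"
    by simp
  show "(\<lambda>n. 1 + inverse (real (Suc n))) \<longlonglongrightarrow> 1"
    by (rule LIMSEQ_inverse_real_of_nat_add)
qed (use vol_ratio_ge_1 in auto)

theorem theorem15:
  fixes N :: nat
  shows "(\<lambda>n::nat. unit_ball_vol (real n) ^ 2 /
            (unit_ball_vol (real n - 1) * unit_ball_vol (real n + 1))
          - (\<Sum>j\<le>N. dcoef j / real n ^ j))
         \<in> O(\<lambda>n. 1 / real n ^ (N + 1))"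
proof -
  have "(\<lambda>n. vol_ratio n * vol_ratio (Suc n) - dsum (Suc N) (real n) * dsum (Suc N) (real (Suc n)))
      \<in> O(\<lambda>n. 1 / real n ^ Suc (Suc N))"
    using dsum_product_remainder_bigo[of "Suc N"]
    by (simp only: vol_ratio_mult_Suc of_nat_Suc add.commute[of 1])
  then have "(\<lambda>n. vol_ratio n - dsum (Suc N) (real n)) \<in> O(\<lambda>n. 1 / real n ^ Suc N)"
    by (rule bigo_diff_of_consecutive_products[OF _ vol_ratio_ge_1 vol_ratio_tendsto dsum_tendsto, rotated])
      simp
  moreover have "(\<lambda>n. dcoef (Suc N) / real n ^ Suc N) \<in> O(\<lambda>n. 1 / real n ^ Suc N)"
    by (intro bigoI[where c = "\<bar>dcoef (Suc N)\<bar>"] always_eventually) (simp add: abs_divide)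
  ultimately have "(\<lambda>n. (vol_ratio n - dsum (Suc N) (real n)) + dcoef (Suc N) / real n ^ Suc N)
      \<in> O(\<lambda>n. 1 / real n ^ Suc N)"
    by (rule sum_in_bigo)
  moreover have "vol_ratio n - dsum (Suc N) (real n) + dcoef (Suc N) / real n ^ Suc N
      = vol_ratio n - dsum N (real n)" for n
    by (simp add: dsum_def del: dcoef.simps)
  ultimately show ?thesis
    unfolding vol_ratio_def[symmetric] dsum_def[symmetric] Suc_eq_plus1[symmetric] by (simp only:)
qed

end
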